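(* An admissible configuration exists for any affine positive normal monoid $M$ with $\operatorname{rank}(M)\ge2$ and any extremal generator $m\in M$.
   Context: Monoids are commutative, cancellative, with unit. An affine monoid is a finitely generated monoid whose group of differences $\operatorname{gp}(M)$ is torsion free; it is positive if it has no nontrivial units; it is normal if $x\in\operatorname{gp}(M)$ and $nx\in M$ for some $n\in\mathbb N$ imply $x\in M$. Let $M$ be an affine positive normal monoid of rank $r$, with $\operatorname{gp}(M)$ identified with $\mathbb Z^r$. For a rational affine hyperplane $\mathcal H\subset\mathbb R^r\setminus\{0\}$ with $\mathbb R_+M=\mathbb R_+\big((\mathbb R_+M)\cap\mathcal H\big)$, put $\Phi(L)=(\mathbb R_+L)\cap\mathcal H$ for a submonoid $L\subset M$, $\Phi(x)=(\mathbb R_+x)\cap\mathcal H$ for a nonzero $x\in M$, and, for a convex set $P\subset\mathcal H$, $M(P)=\{z\in\mathbb Z^r\setminus\{0\}\mid(\mathbb R_+z)\cap\mathcal H\in P\}\cup\{0\}$. An element $m\in M$ is an extremal generator if $\Phi(m)$ is a vertex of $\Phi(M)$ and $m$ generates $(\mathbb R_+m)\cap M\cong\mathbb Z_+$. For polytopes $P\subset Q$ sharing a vertex $v$, $Q$ is tangent to $P$ at $v$ if $\dim P=\dim Q$ and the corner cones spanned by $P$ and $Q$ at $v$ coincide. A pyramid with apex $v$ and base $P$ is $\operatorname{conv}(v,P)$ with $v\notin\operatorname{Aff}(P)$. For an extremal generator $m\in M$, a triple $(\mathcal H,\Delta_1,\Delta_2)$ is an admissible configuration if $\mathcal H\subset\mathbb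 R^r\setminus\{0\}$ is a rational affine hyperplane with $\mathbb R_+M=\mathbb R_+\big((\mathbb R_+M)\cap\mathcal H\big)$, and $\Delta_1,\Delta_2\subset\mathcal H$ are rational pyramids with apex $\Phi(m)$ such that: (a) $\Phi(M)\subset\Delta_1\subset\Delta_2$; (b) $\Delta_1$ and $\Delta_2$ are tangent to $\Phi(M)$ at $\Phi(m)$; (c) $M(\Delta_1)=\mathbb Z_+m+M(F_1)$, where $F_1\subset\Delta_1$ is the facet opposite to $\Phi(m)$; (d) $M(\Delta_2)=\mathbb Z_+m+M(F_2)$, where $F_2\subset\Delta_2$ is the facet opposite to $\Phi(m)$; (e) $F_2\cap\Phi(M)=\emptyset$. *)

theory Defs
  imports "HOL-Analysis.Analysis"
begin

text \<open>We work in \<open>\<real>^r\<close> with \<open>r = CARD('n)\<close>; the group \<open>\<int>^r\<close> is the set of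
  integral points.\<close>

definition lattice_pts :: "(real^'n) set" where
  "lattice_pts = {x. \<forall>i. x $ i \<in> \<int>}"

definition rat_vec :: "real^'n \<Rightarrow> bool" where
  "rat_vec x \<longleftrightarrow> (\<forall>i. x $ i \<in> \<rat>)"

definition affine_monoid :: "(real^'n) set \<Rightarrow> bool" where
  "affine_monoid M \<longleftrightarrow> 0 \<in> M \<and> M \<subseteq> lattice_pts \<and> (\<forall>x\<in>M. \<forall>y\<in>M. x + y \<in> M) \<and>
     (\<exists>G. finite G \<and> G \<subseteq> M \<and> M = {(\<Sum>g\<in>G. of_nat (k g) *\<^sub>R g) | k :: real^'n \<Rightarrow> nat. True})"

definition gp :: "(real^'n) set \<Rightarrow> (real^'n) set" where
  "gp M = {x - y | x y. x \<in> M \<and> y \<in> M}"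

definition positive_monoid :: "(real^'n) set \<Rightarrow> bool" where
  "positive_monoid M \<longleftrightarrow> (\<forall>x\<in>M. - x \<in> M \<longrightarrow> x = 0)"

definition normal_monoid :: "(real^'n) set \<Rightarrow> bool" where
  "normal_monoid M \<longleftrightarrow> (\<forall>x\<in>gp M. \<forall>n::nat. n \<ge> 1 \<and> of_nat n *\<^sub>R x \<in> M \<longrightarrow> x \<in> M)"

definition ray :: "real^'n \<Rightarrow> (real^'n) set" where
  "ray x = {c *\<^sub>R x | c. c \<ge> 0}"

definition rcone :: "(real^'n) set \<Rightarrow> (real^'n) set" where
  "rcone L = convex_cone hull L"

definition rat_hyperplane :: "(real^'n) set \<Rightarrow> bool" where
  "rat_hyperplane H \<longleftrightarrow> (\<exists>a c. rat_vec a \<and> a \<noteq> 0 \<and> c \<in> \<rat> \<and> H = {x. a \<bullet> x = c})"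

definition good_hyperplane :: "(real^'n) set \<Rightarrow> (real^'n) set \<Rightarrow> bool" where
  "good_hyperplane M H \<longleftrightarrow> rat_hyperplane H \<and> 0 \<notin> H \<and> rcone M = rcone (rcone M \<inter> H)"

definition PhiS :: "(real^'n) set \<Rightarrow> (real^'n) set \<Rightarrow> (real^'n) set" where
  "PhiS H L = rcone L \<inter> H"

definition PhiV :: "(real^'n) set \<Rightarrow> real^'n \<Rightarrow> (real^'n) set" where
  "PhiV H x = ray x \<inter> H"

text \<open>\<open>M(P)\<close>: \<open>(\<real>_+ z) \<inter> H \<in> P\<close> is read as: this intersection is a single point lying in P.\<close>
definition MP :: "(real^'n) set \<Rightarrow> (real^'n) set \<Rightarrow> (real^'n) set" where
  "MP H P = {z \<in> lattice_pts. z \<noteq> 0 \<and> (\<exists>p\<in>P. PhiV H z = {p})} \<union> {0}"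

definition extremal_generator :: "(real^'n) set \<Rightarrow> (real^'n) set \<Rightarrow> real^'n \<Rightarrow> bool" where
  "extremal_generator M H m \<longleftrightarrow> m \<in> M \<and>
     (\<exists>v. PhiV H m = {v} \<and> v extreme_point_of PhiS H M) \<and>
     ray m \<inter> M = range (\<lambda>k::nat. of_nat k *\<^sub>R m)"

definition corner_cone :: "(real^'n) set \<Rightarrow> real^'n \<Rightarrow> (real^'n) set" where
  "corner_cone P v = {c *\<^sub>R (x - v) | c x. 0 \<le> c \<and> x \<in> P}"

definition tangent_at :: "(real^'n) set \<Rightarrow> (real^'n) set \<Rightarrow> real^'n \<Rightarrow> bool" where
  "tangent_at Q P v \<longleftrightarrow> P \<subseteq> Q \<and> v extreme_point_of P \<and> v extreme_point_of Q \<and>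
     aff_dim P = aff_dim Q \<and> corner_cone P v = corner_cone Q v"

definition rational_polytope :: "(real^'n) set \<Rightarrow> bool" where
  "rational_polytope P \<longleftrightarrow> (\<exists>V. finite V \<and> (\<forall>x\<in>V. rat_vec x) \<and> P = convex hull V)"

definition rat_pyramid :: "(real^'n) set \<Rightarrow> real^'n \<Rightarrow> (real^'n) set \<Rightarrow> (real^'n) set \<Rightarrow> bool" where
  "rat_pyramid H v F D \<longleftrightarrow> rat_vec v \<and> rational_polytope F \<and> v \<notin> affine hull F \<and>
     D = convex hull (insert v F) \<and> D \<subseteq> H"

definition admissible_config ::
  "(real^'n) set \<Rightarrow> real^'n \<Rightarrow> (real^'n) set \<Rightarrow> (real^'n) set \<Rightarrow> (real^'n) set \<Rightarrow> bool" where
  "admissible_config M m H D1 D2 \<longleftrightarrow> good_hyperplane M H \<and>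
     (\<exists>v F1 F2. PhiV H m = {v} \<and> rat_pyramid H v F1 D1 \<and> rat_pyramid H v F2 D2 \<and>
        PhiS H M \<subseteq> D1 \<and> D1 \<subseteq> D2 \<and>
        tangent_at D1 (PhiS H M) v \<and> tangent_at D2 (PhiS H M) v \<and>
        MP H D1 = {of_nat k *\<^sub>R m + y | k y. y \<in> MP H F1} \<and>
        MP H D2 = {of_nat k *\<^sub>R m + y | k y. y \<in> MP H F2} \<and>
        F2 \<inter> PhiS H M = {})"

end

theory Submission
  imports Defs
begin

text \<open>Write the vertex \<open>\<Phi>(m)\<close> as \<open>m / (h\<^sub>0 \<bullet> m)\<close> for the original hyperplane \<open>h\<^sub>0 \<bullet> x = 1\<close>.
  Since it is a vertex, it can be separated from the projections of the generators off the ray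
  \<open>\<real>\<^sub>+ m\<close>; this yields an integral \<open>\<mu>\<close> with \<open>\<mu> \<bullet> m = 0\<close> and \<open>\<mu> > 0\<close> on those generators.
  Normality and extremality make \<open>m\<close> primitive, so some integral \<open>\<nu>\<close> has \<open>\<nu> \<bullet> m = 1\<close>, and
  \<open>\<lambda> = \<nu> + N \<mu>\<close> is positive on all nonzero generators for large \<open>N\<close>. On the new hyperplane
  \<open>(\<lambda> + \<mu>) \<bullet> x = 1\<close> the generators off the ray are pushed away from \<open>m\<close> into the slice
  \<open>\<lambda> = 0\<close>; their hull \<open>F\<close> is the base of a pyramid \<open>\<Delta>\<close> with apex \<open>m\<close> containing \<open>\<Phi>(M)\<close> and with the
  same corner at \<open>m\<close>. A lattice point \<open>z\<close> over \<open>\<Delta>\<close> splits as \<open>(\<lambda> \<bullet> z) m + y\<close> with \<open>y\<close> over \<open>F\<close>,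
  and \<open>\<lambda> \<bullet> z\<close> is a nonnegative integer. The single pyramid \<open>\<Delta>\<close> serves as both \<open>\<Delta>\<^sub>1\<close> and \<open>\<Delta>\<^sub>2\<close>.\<close>

lemma lattice_pts_add: "x \<in> lattice_pts \<Longrightarrow> y \<in> lattice_pts \<Longrightarrow> x + y \<in> lattice_pts"
  unfolding lattice_pts_def by auto

lemma lattice_pts_diff: "x \<in> lattice_pts \<Longrightarrow> y \<in> lattice_pts \<Longrightarrow> x - y \<in> lattice_pts"
  unfolding lattice_pts_def by auto

lemma lattice_pts_scaleR: "x \<in> lattice_pts \<Longrightarrow> c \<in> \<int> \<Longrightarrow> c *\<^sub>R x \<in> lattice_pts"
  unfolding lattice_pts_def by auto

lemma axis_in_lattice_pts: "axis i 1 \<in> lattice_pts"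
  unfolding lattice_pts_def axis_def by auto

lemma inner_lattice_pts_Ints: "x \<in> lattice_pts \<Longrightarrow> y \<in> lattice_pts \<Longrightarrow> x \<bullet> y \<in> \<int>"
  unfolding lattice_pts_def inner_vec_def by (auto intro!: Ints_sum Ints_mult)

lemma lattice_pts_imp_rat_vec: "x \<in> lattice_pts \<Longrightarrow> rat_vec x"
  unfolding lattice_pts_def rat_vec_def using Ints_subset_Rats by blast

lemma inner_rat_vec_Rats: "rat_vec x \<Longrightarrow> rat_vec y \<Longrightarrow> x \<bullet> y \<in> \<rat>"
  unfolding rat_vec_def inner_vec_def by (auto intro!: Rats_sum Rats_mult)

lemma rat_vec_multiple_in_lattice_pts:
  fixes x :: "real^'n"
  assumes "rat_vec x"
  obtains d :: nat where "d > 0" "of_nat d *\<^sub>R x \<in> lattice_pts"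
proof -
  have "\<exists>b::nat. b > 0 \<and> of_nat b * x $ i \<in> \<int>" for i
  proof -
    from assms obtain a b where "b > 0" "x $ i = of_int a / of_int b"
      unfolding rat_vec_def by (metis Rats_cases')
    then show ?thesis by (intro exI[of _ "nat b"]) simp
  qed
  then obtain b :: "'n \<Rightarrow> nat" where b: "\<And>i. b i > 0" "\<And>i. of_nat (b i) * x $ i \<in> \<int>"
    by metis
  define d where "d = (\<Prod>i\<in>UNIV. b i)"
  have "of_nat d * x $ i \<in> \<int>" for i
  proof -
    have "of_nat d * x $ i = (of_nat (b i) * x $ i) * of_nat (\<Prod>j\<in>UNIV - {i}. b j)"
      unfolding d_def by (simp add: prod.remove[of UNIV i])
    then show ?thesis using b(2)[of i] by (metis Ints_mult Ints_of_nat)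
  qed
  moreover have "d > 0" unfolding d_def using b(1) by (simp add: prod_pos)
  ultimately show ?thesis using that unfolding lattice_pts_def by simp
qed

lemma rat_vec_dense:
  fixes a :: "real^'n"
  assumes "e > 0"
  obtains a' where "rat_vec a'" "norm (a - a') < e"
proof -
  define \<delta> where "\<delta> = e / real CARD('n)"
  have "\<delta> > 0" unfolding \<delta>_def using assms by simp
  then have "\<forall>i. \<exists>r. r \<in> \<rat> \<and> \<bar>r - a $ i\<bar> < \<delta>" using rational_approximation by metis
  then obtain f where f: "\<And>i. f i \<in> \<rat>" "\<And>i. \<bar>f i - a $ i\<bar> < \<delta>" by metis
  define a' where "a' = (\<chi> i. f i)"
  have "norm (a - a') \<le> (\<Sum>i\<in>UNIV. \<bar>(a - a') $ i\<bar>)" by (rule norm_le_l1_cart)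
  also have "\<dots> < (\<Sum>i\<in>(UNIV::'n set). \<delta>)"
    by (rule sum_strict_mono) (use f in \<open>auto simp: a'_def abs_minus_commute\<close>)
  also have "\<dots> = e" unfolding \<delta>_def by simp
  finally show ?thesis using f that[of a'] by (simp add: rat_vec_def a'_def)
qed

lemma rat_vec_positive_on_finite:
  fixes a :: "real^'n"
  assumes "finite W" "\<And>w. w \<in> W \<Longrightarrow> a \<bullet> w > 0"
  obtains a' where "rat_vec a'" "\<And>w. w \<in> W \<Longrightarrow> a' \<bullet> w > 0"
proof -
  define U where "U = (\<Inter>w\<in>W. {x. w \<bullet> x > 0})"
  have "open U" unfolding U_def using assms(1) by (intro open_INT) (auto intro: open_halfspace_gt)
  moreover have "a \<in> U" unfolding U_def using assms(2) by (auto simp: inner_commute)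
  ultimately obtain e where "e > 0" "ball a e \<subseteq> U" using open_contains_ball by blast
  moreover obtain a' where "rat_vec a'" "norm (a - a') < e" using rat_vec_dense \<open>e > 0\<close> by blast
  ultimately show ?thesis using that unfolding U_def by (auto simp: dist_norm inner_commute)
qed

lemma PhiV_hyperplane:
  fixes h z :: "real^'n"
  shows "PhiV {x. h \<bullet> x = 1} z = (if h \<bullet> z > 0 then {(1 / (h \<bullet> z)) *\<^sub>R z} else {})"
proof (cases "h \<bullet> z > 0")
  case True
  then show ?thesis unfolding PhiV_def ray_def by (auto simp: field_simps)
next
  case False
  have "c * (h \<bullet> z) \<noteq> 1" if "c \<ge> 0" for c :: real
    using False that by (metis mult_nonneg_nonpos not_le zero_less_one)
  then show ?thesis using False unfolding PhiV_def ray_def by auto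
qed

lemma convex_PhiS: "convex H \<Longrightarrow> convex (PhiS H M)"
  unfolding PhiS_def rcone_def by (simp add: convex_Int convex_convex_cone_hull)

lemma hyperplane_projection_in_PhiS:
  fixes g h :: "real^'n"
  assumes "g \<in> rcone M" "0 < h \<bullet> g"
  shows "(1 / (h \<bullet> g)) *\<^sub>R g \<in> PhiS {x. h \<bullet> x = 1} M"
  using assms unfolding PhiS_def rcone_def by (auto intro: convex_cone_hull_mul)

lemma hyperplane_projection_eq_imp_ray:
  fixes g h m :: "real^'n"
  assumes "0 < h \<bullet> g" "0 < h \<bullet> m" "(1 / (h \<bullet> g)) *\<^sub>R g = (1 / (h \<bullet> m)) *\<^sub>R m"
  shows "g \<in> ray m"
proof -
  have "g = (h \<bullet> g) *\<^sub>R ((1 / (h \<bullet> g)) *\<^sub>R g)" using assms(1) by simp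
  also have "\<dots> = (h \<bullet> g / (h \<bullet> m)) *\<^sub>R m" unfolding assms(3) by simp
  finally show ?thesis unfolding ray_def using assms(1,2) by (auto intro!: exI[of _ "h \<bullet> g / (h \<bullet> m)"])
qed

lemma rcone_eq_rcone_hyperplane_slice:
  fixes h :: "real^'n"
  assumes "\<And>x. x \<in> rcone M \<Longrightarrow> x \<noteq> 0 \<Longrightarrow> 0 < h \<bullet> x"
  shows "rcone M = rcone (rcone M \<inter> {x. h \<bullet> x = 1})"
proof
  show "rcone (rcone M \<inter> {x. h \<bullet> x = 1}) \<subseteq> rcone M" unfolding rcone_def
    by (metis hull_hull hull_mono inf_le1)
  show "rcone M \<subseteq> rcone (rcone M \<inter> {x. h \<bullet> x = 1})"
  proof
    fix x assume x: "x \<in> rcone M"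
    show "x \<in> rcone (rcone M \<inter> {x. h \<bullet> x = 1})"
    proof (cases "x = 0")
      case True
      then show ?thesis unfolding rcone_def by (simp add: convex_cone_hull_contains_0)
    next
      case False
      then have hx: "0 < h \<bullet> x" using assms x by simp
      have "(1 / (h \<bullet> x)) *\<^sub>R x \<in> rcone M \<inter> {x. h \<bullet> x = 1}"
        using hyperplane_projection_in_PhiS[OF x hx] unfolding PhiS_def .
      then have "(h \<bullet> x) *\<^sub>R ((1 / (h \<bullet> x)) *\<^sub>R x) \<in> rcone (rcone M \<inter> {x. h \<bullet> x = 1})"
        unfolding rcone_def using hx by (intro convex_cone_hull_mul hull_inc) auto
      then show ?thesis using hx by simp
    qed
  qed
qed

lemma MP_hyperplane:
  fixes h :: "real^'n"
  shows "MP {x. h \<bullet> x = 1} P =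
    {z \<in> lattice_pts. z \<noteq> 0 \<and> h \<bullet> z > 0 \<and> (1 / (h \<bullet> z)) *\<^sub>R z \<in> P} \<union> {0}"
  unfolding MP_def PhiV_hyperplane by auto

lemma normalized_add_in_convex:
  fixes h a b :: "'a::real_inner"
  assumes "convex C" "h \<bullet> a > 0" "h \<bullet> b > 0"
    and "(1 / (h \<bullet> a)) *\<^sub>R a \<in> C" "(1 / (h \<bullet> b)) *\<^sub>R b \<in> C"
  shows "(1 / (h \<bullet> (a + b))) *\<^sub>R (a + b) \<in> C"
proof -
  have sum_pos: "h \<bullet> (a + b) > 0" using assms(2,3) by (simp add: inner_add_right)
  have "(h \<bullet> a / (h \<bullet> (a + b))) *\<^sub>R ((1 / (h \<bullet> a)) *\<^sub>R a)
      + (h \<bullet> b / (h \<bullet> (a + b))) *\<^sub>R ((1 / (h \<bullet> b)) *\<^sub>R b) \<in> C"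
    using assms sum_pos by (intro convexD) (auto simp: inner_add_right add_divide_distrib[symmetric])
  then show ?thesis using assms(2,3) by (simp add: scaleR_add_right)
qed

lemma MP_mono: "P \<subseteq> Q \<Longrightarrow> MP H P \<subseteq> MP H Q"
  unfolding MP_def by blast

lemma MP_hyperplane_add:
  fixes h :: "real^'n"
  assumes "convex P" "a \<in> MP {x. h \<bullet> x = 1} P" "b \<in> MP {x. h \<bullet> x = 1} P"
  shows "a + b \<in> MP {x. h \<bullet> x = 1} P"
proof (cases "a = 0 \<or> b = 0")
  case False
  then have "a \<in> lattice_pts" "b \<in> lattice_pts" "0 < h \<bullet> a" "0 < h \<bullet> b"
    "(1 / (h \<bullet> a)) *\<^sub>R a \<in> P" "(1 / (h \<bullet> b)) *\<^sub>R b \<in> P"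
    using assms(2,3) unfolding MP_hyperplane by auto
  then show ?thesis unfolding MP_hyperplane
    using normalized_add_in_convex[OF assms(1)] lattice_pts_add
    by (auto simp: inner_add_right)
qed (use assms in auto)

lemma corner_cone_conic_hull: "corner_cone P v = conic hull ((\<lambda>x. x - v) ` P)"
  unfolding corner_cone_def conic_hull_explicit by blast

lemma convex_corner_cone:
  fixes P :: "(real^'n) set"
  shows "convex P \<Longrightarrow> convex (corner_cone P v)"
  unfolding corner_cone_conic_hull
  by (intro convex_conic_hull) (simp add: convex_translation_subtract)

lemma aff_dim_eq_dim_corner_cone:
  fixes P :: "(real^'n) set"
  assumes "v \<in> P"
  shows "aff_dim P = int (dim (corner_cone P v))"
proof -
  let ?T = "(\<lambda>x. x - v) ` P"
  have "aff_dim P = int (dim ?T)"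
    using aff_dim_eq_dim[of v P] assms by (simp add: hull_inc)
  moreover have "dim (conic hull ?T) = dim ?T"
  proof (rule antisym)
    have "conic hull ?T \<subseteq> span ?T" by (intro hull_minimal span_superset) (simp add: conic_span)
    then show "dim (conic hull ?T) \<le> dim ?T" by (metis dim_span dim_subset)
    show "dim ?T \<le> dim (conic hull ?T)" by (intro dim_subset hull_subset)
  qed
  ultimately show ?thesis unfolding corner_cone_conic_hull by simp
qed

locale pyramid_construction =
  fixes M G :: "(real^'n) set" and m lam mu :: "real^'n"
  assumes finite_G: "finite G" and G_subset_M: "G \<subseteq> M" and M_subset_cone: "M \<subseteq> rcone G"
    and M_lattice: "M \<subseteq> lattice_pts" and m_in_M: "m \<in> M"
    and lam_lattice: "lam \<in> lattice_pts" and mu_lattice: "mu \<in> lattice_pts"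
    and lam_m: "lam \<bullet> m = 1" and mu_m: "mu \<bullet> m = 0"
    and generator_cases:
      "\<And>g. g \<in> G \<Longrightarrow> (0 < mu \<bullet> g \<and> 0 < lam \<bullet> g) \<or> (g = (lam \<bullet> g) *\<^sub>R m \<and> 0 \<le> lam \<bullet> g)"
begin

definition "h = lam + mu"
definition "H = {x. h \<bullet> x = 1}"
definition "G_off = {g\<in>G. 0 < mu \<bullet> g}"

text \<open>Where the ray from \<open>m\<close> through the projection \<open>g / (h \<bullet> g)\<close> of \<open>g\<close> to \<open>H\<close> meets the slice
  \<open>lam = 0\<close>.\<close>
definition "base_pt g = (1 / (mu \<bullet> g)) *\<^sub>R (g - (lam \<bullet> g) *\<^sub>R m)"

definition "V = base_pt ` G_off"
definition "F = convex hull V"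
definition "D = convex hull (insert m V)"

lemma convex_H: "convex H"
  unfolding H_def by (rule convex_hyperplane)

lemma h_m: "h \<bullet> m = 1"
  unfolding h_def using lam_m mu_m by (simp add: inner_add_left)

lemma m_lattice: "m \<in> lattice_pts"
  using m_in_M M_lattice by auto

lemma rcone_M_subset_rcone_G: "rcone M \<subseteq> rcone G"
  unfolding rcone_def using M_subset_cone
  by (intro hull_minimal convex_cone_convex_cone_hull) (simp add: rcone_def)

lemma rcone_M_nonneg:
  "rcone M \<subseteq> {x. 0 \<le> lam \<bullet> x \<and> 0 \<le> mu \<bullet> x \<and> (lam \<bullet> x = 0 \<longrightarrow> x = 0)}" (is "_ \<subseteq> ?S")
proof -
  have "convex_cone ?S"
    unfolding convex_cone_iff by (auto simp: inner_add_right zero_le_mult_iff add_nonneg_eq_0_iff)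
  moreover have "G \<subseteq> ?S"
  proof
    fix g assume "g \<in> G"
    from generator_cases[OF this] show "g \<in> ?S"
    proof
      assume "g = (lam \<bullet> g) *\<^sub>R m \<and> 0 \<le> lam \<bullet> g"
      then obtain t where "g = t *\<^sub>R m" "0 \<le> t" by blast
      then show "g \<in> ?S" using lam_m mu_m by auto
    qed auto
  qed
  ultimately have "rcone G \<subseteq> ?S" unfolding rcone_def by (rule hull_minimal[rotated])
  then show ?thesis using rcone_M_subset_rcone_G by blast
qed

lemma rcone_M_h_pos: "x \<in> rcone M \<Longrightarrow> x \<noteq> 0 \<Longrightarrow> 0 < h \<bullet> x"
  using rcone_M_nonneg unfolding h_def by (fastforce simp: inner_add_left)

lemma base_pt_in_slice:
  assumes "g \<in> G_off"
  shows "h \<bullet> base_pt g = 1" "lam \<bullet> base_pt g = 0"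
proof -
  have "0 < mu \<bullet> g" using assms unfolding G_off_def by auto
  moreover have "h \<bullet> (g - (lam \<bullet> g) *\<^sub>R m) = mu \<bullet> g"
    unfolding h_def using lam_m mu_m by (simp add: inner_diff_right inner_add_left algebra_simps)
  ultimately show "h \<bullet> base_pt g = 1" unfolding base_pt_def by simp
  show "lam \<bullet> base_pt g = 0" unfolding base_pt_def using lam_m by (simp add: inner_diff_right)
qed

lemma F_subset_slice: "F \<subseteq> H \<inter> {x. lam \<bullet> x = 0}"
  unfolding F_def H_def V_def using base_pt_in_slice
  by (intro hull_minimal convex_Int convex_hyperplane) auto

lemma D_subset_H: "D \<subseteq> H"
  unfolding D_def H_def V_def using base_pt_in_slice h_m
  by (intro hull_minimal convex_hyperplane) auto

lemma D_eq: "D = convex hull (insert m F)"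
  unfolding D_def F_def by (rule hull_insert)

lemma m_in_D: "m \<in> D"
  unfolding D_def by (simp add: hull_inc)

lemma D_cases:
  assumes "x \<in> D"
  obtains "x = m" | u f where "0 \<le> u" "u \<le> 1" "f \<in> F" "x = (1 - u) *\<^sub>R m + u *\<^sub>R f"
  using assms unfolding D_def F_def convex_hull_insert_alt by (auto split: if_splits)

lemma lam_on_D: "x \<in> D \<Longrightarrow> 0 \<le> lam \<bullet> x \<and> lam \<bullet> x \<le> 1 \<and> (lam \<bullet> x = 1 \<longrightarrow> x = m)"
proof (elim D_cases)
  fix u f assume "0 \<le> u" "u \<le> 1" "f \<in> F" "x = (1 - u) *\<^sub>R m + u *\<^sub>R f"
  moreover have "lam \<bullet> f = 0" using F_subset_slice \<open>f \<in> F\<close> by auto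
  ultimately show ?thesis using lam_m by (auto simp: inner_add_right)
qed (use lam_m in auto)

lemma D_decompose_along_m:
  assumes "x \<in> D"
  shows "x = (lam \<bullet> x) *\<^sub>R m \<or> (\<exists>u>0. \<exists>f\<in>F. x - (lam \<bullet> x) *\<^sub>R m = u *\<^sub>R f)"
  using assms
proof (cases rule: D_cases)
  case (2 u f)
  moreover have "lam \<bullet> f = 0" using F_subset_slice \<open>f \<in> F\<close> by auto
  ultimately have eq: "x - (lam \<bullet> x) *\<^sub>R m = u *\<^sub>R f" using lam_m by (simp add: inner_add_right)
  show ?thesis
  proof (cases "u = 0")
    case False
    then have "u > 0" using \<open>0 \<le> u\<close> by simp
    then show ?thesis using eq \<open>f \<in> F\<close> by blast
  qed (use eq in simp)
qed (use lam_m in auto)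

lemma rcone_M_subset_apex_cone: "rcone M \<subseteq> convex_cone hull (insert m V)"
proof -
  have "g \<in> convex_cone hull (insert m V)" if "g \<in> G" for g
    using generator_cases[OF that]
  proof
    assume g: "0 < mu \<bullet> g \<and> 0 < lam \<bullet> g"
    then have "base_pt g \<in> V" unfolding V_def G_off_def using that by auto
    moreover have "g = (lam \<bullet> g) *\<^sub>R m + (mu \<bullet> g) *\<^sub>R base_pt g"
      unfolding base_pt_def using g by simp
    ultimately show ?thesis using g
      by (metis convex_cone_hull_add convex_cone_hull_mul hull_inc insertCI insert_subset
          less_imp_le subset_insertI)
  next
    assume "g = (lam \<bullet> g) *\<^sub>R m \<and> 0 \<le> lam \<bullet> g"
    then show ?thesis by (metis convex_cone_hull_mul hull_inc insertI1)
  qed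
  then have "rcone G \<subseteq> convex_cone hull (insert m V)"
    unfolding rcone_def by (intro hull_minimal convex_cone_convex_cone_hull) auto
  then show ?thesis using rcone_M_subset_rcone_G by blast
qed

lemma PhiS_subset_D: "PhiS H M \<subseteq> D"
proof
  fix x assume "x \<in> PhiS H M"
  then have "x \<in> convex_cone hull (insert m V)" and hx: "h \<bullet> x = 1"
    using rcone_M_subset_apex_cone unfolding PhiS_def H_def by auto
  then obtain c y where "y \<in> D" "x = c *\<^sub>R y"
    unfolding convex_cone_hull_convex_hull_nonempty[OF insert_not_empty] D_def by blast
  moreover from \<open>y \<in> D\<close> have "h \<bullet> y = 1" using D_subset_H unfolding H_def by auto
  ultimately show "x \<in> D" using hx by simp
qed

lemma m_extreme_D: "m extreme_point_of D"
  unfolding extreme_point_of_def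
proof (intro conjI ballI m_in_D notI)
  fix a b assume ab: "a \<in> D" "b \<in> D" "m \<in> open_segment a b"
  then obtain u where u: "a \<noteq> b" "0 < u" "u < 1" "m = (1 - u) *\<^sub>R a + u *\<^sub>R b"
    unfolding in_segment by blast
  have "(1 - u) * (1 - lam \<bullet> a) + u * (1 - lam \<bullet> b) = 1 - lam \<bullet> m"
    unfolding u(4) by (simp add: inner_add_right algebra_simps)
  also have "\<dots> = 0" using lam_m by simp
  moreover have "0 \<le> (1 - u) * (1 - lam \<bullet> a)" "0 \<le> u * (1 - lam \<bullet> b)"
    using lam_on_D[OF ab(1)] lam_on_D[OF ab(2)] u(2,3) by auto
  ultimately have "(1 - u) * (1 - lam \<bullet> a) = 0" "u * (1 - lam \<bullet> b) = 0" by linarith+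
  then have "lam \<bullet> a = 1 \<and> lam \<bullet> b = 1" using u(2,3) by auto
  then show False using lam_on_D ab u(1) by auto
qed

lemma m_in_PhiS: "m \<in> PhiS H M"
  unfolding PhiS_def H_def rcone_def using h_m m_in_M by (auto intro: hull_inc)

lemma m_extreme_PhiS: "m extreme_point_of PhiS H M"
  using m_extreme_D m_in_PhiS PhiS_subset_D unfolding extreme_point_of_def by blast

lemma base_pt_direction:
  assumes "g \<in> G_off"
  defines "y \<equiv> (1 / (h \<bullet> g)) *\<^sub>R g"
  shows "y \<in> PhiS H M" "base_pt g - m = (h \<bullet> g / (mu \<bullet> g)) *\<^sub>R (y - m)" "0 < h \<bullet> g / (mu \<bullet> g)"
proof -
  have mu_g: "0 < mu \<bullet> g" and "g \<in> rcone M"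
    using assms G_subset_M unfolding G_off_def rcone_def by (auto intro: hull_inc)
  moreover have h_g: "h \<bullet> g = lam \<bullet> g + mu \<bullet> g" unfolding h_def by (simp add: inner_add_left)
  ultimately have "0 < h \<bullet> g" using rcone_M_nonneg by fastforce
  show "y \<in> PhiS H M" unfolding y_def H_def
    using \<open>g \<in> rcone M\<close> \<open>0 < h \<bullet> g\<close> by (rule hyperplane_projection_in_PhiS)
  show "0 < h \<bullet> g / (mu \<bullet> g)" using \<open>0 < h \<bullet> g\<close> mu_g by simp
  have "(mu \<bullet> g) *\<^sub>R (base_pt g - m) = (h \<bullet> g) *\<^sub>R (y - m)"
    unfolding base_pt_def y_def using mu_g \<open>0 < h \<bullet> g\<close> h_g by (simp add: algebra_simps)
  then have "(1 / (mu \<bullet> g)) *\<^sub>R ((mu \<bullet> g) *\<^sub>R (base_pt g - m))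
      = (1 / (mu \<bullet> g)) *\<^sub>R ((h \<bullet> g) *\<^sub>R (y - m))" by simp
  then show "base_pt g - m = (h \<bullet> g / (mu \<bullet> g)) *\<^sub>R (y - m)"
    using mu_g by simp
qed

lemma corner_cone_D: "corner_cone D m = corner_cone (PhiS H M) m"
proof
  show "corner_cone (PhiS H M) m \<subseteq> corner_cone D m"
    using PhiS_subset_D unfolding corner_cone_def by blast
  let ?C = "corner_cone (PhiS H M) m"
  have "conic ?C" unfolding corner_cone_conic_hull by (rule conic_conic_hull)
  have "insert m V \<subseteq> (+) m ` ?C"
  proof
    fix w assume "w \<in> insert m V"
    then have "w - m \<in> ?C"
    proof
      assume "w = m"
      have "0 *\<^sub>R (m - m) \<in> ?C" unfolding corner_cone_def using m_in_PhiS by blast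
      then show ?thesis using \<open>w = m\<close> by simp
    next
      assume "w \<in> V"
      then obtain g where g: "g \<in> G_off" "w = base_pt g" unfolding V_def by auto
      show ?thesis unfolding g(2) base_pt_direction(2)[OF g(1)] corner_cone_def
        using base_pt_direction(1,3)[OF g(1)] by (blast intro: less_imp_le)
    qed
    then show "w \<in> (+) m ` ?C" by (rule rev_image_eqI) simp
  qed
  then have "D \<subseteq> (+) m ` ?C"
    unfolding D_def by (rule hull_minimal) (rule convex_translation[OF convex_corner_cone[OF convex_PhiS[OF convex_H]]])
  then have "(\<lambda>x. x - m) ` D \<subseteq> ?C" by auto
  then show "corner_cone D m \<subseteq> ?C"
    unfolding corner_cone_conic_hull[of D] using \<open>conic ?C\<close> by (rule hull_minimal)
qed

lemma tangent_D: "tangent_at D (PhiS H M) m"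
  unfolding tangent_at_def
  using PhiS_subset_D m_extreme_PhiS m_extreme_D corner_cone_D
    aff_dim_eq_dim_corner_cone[OF m_in_D] aff_dim_eq_dim_corner_cone[OF m_in_PhiS]
  by simp

lemma convex_D: "convex D"
  unfolding D_def by simp

lemma F_subset_D: "F \<subseteq> D"
  unfolding D_eq using hull_subset[of "insert m F" convex] by blast

lemma MP_D_superset: "{of_nat k *\<^sub>R m + y | k y. y \<in> MP H F} \<subseteq> MP H D"
proof safe
  fix k :: nat and y assume "y \<in> MP H F"
  have "of_nat k *\<^sub>R m \<in> MP H D" unfolding H_def MP_hyperplane
    using h_m m_in_D lattice_pts_scaleR[OF m_lattice, of "of_nat k"] by (cases "k = 0") auto
  moreover have "y \<in> MP H D" using \<open>y \<in> MP H F\<close> MP_mono[OF F_subset_D] by blast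
  ultimately show "of_nat k *\<^sub>R m + y \<in> MP H D"
    unfolding H_def by (rule MP_hyperplane_add[OF convex_D])
qed

lemma MP_D_subset: "MP H D \<subseteq> {of_nat k *\<^sub>R m + y | k y. y \<in> MP H F}"
proof
  fix z assume z_MP: "z \<in> MP H D"
  show "z \<in> {of_nat k *\<^sub>R m + y | k y. y \<in> MP H F}"
  proof (cases "z = 0")
    case True
    then show ?thesis unfolding MP_def by force
  next
    case False
    define x where "x = (1 / (h \<bullet> z)) *\<^sub>R z"
    have z: "z \<in> lattice_pts" "0 < h \<bullet> z" and "x \<in> D"
      using z_MP False unfolding x_def H_def MP_hyperplane by auto
    have z_eq: "z = (h \<bullet> z) *\<^sub>R x" unfolding x_def using z(2) by simp
    \<comment> \<open>Integrality of \<open>lam \<bullet> z\<close> is what lets the \<open>m\<close>-component of \<open>z\<close> be split off in \<open>M(D)\<close>.\<close>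
    have "lam \<bullet> z \<in> \<int>" using inner_lattice_pts_Ints[OF lam_lattice z(1)] .
    moreover have "0 \<le> lam \<bullet> z" using lam_on_D[OF \<open>x \<in> D\<close>] z(2) by (subst z_eq) simp
    ultimately obtain k :: nat where k: "lam \<bullet> z = of_nat k"
      by (metis Ints_cases of_int_0_le_iff of_int_of_nat_eq zero_le_imp_eq_int)
    define y where "y = z - (lam \<bullet> z) *\<^sub>R m"
    have y_eq: "y = (h \<bullet> z) *\<^sub>R (x - (lam \<bullet> x) *\<^sub>R m)"
      unfolding y_def by (subst (1 2) z_eq) (simp add: algebra_simps)
    have "y \<in> MP H F"
    proof (cases "y = 0")
      case False
      then obtain u f where "0 < u" "f \<in> F" "x - (lam \<bullet> x) *\<^sub>R m = u *\<^sub>R f"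
        using D_decompose_along_m[OF \<open>x \<in> D\<close>] y_eq by auto
      moreover have "h \<bullet> f = 1" using F_subset_slice \<open>f \<in> F\<close> unfolding H_def by auto
      moreover have "y \<in> lattice_pts"
        unfolding y_def using z(1) lattice_pts_scaleR[OF m_lattice \<open>lam \<bullet> z \<in> \<int>\<close>]
        by (rule lattice_pts_diff)
      ultimately show ?thesis unfolding H_def MP_hyperplane using y_eq z(2) False by auto
    qed (simp add: MP_def)
    moreover have "z = of_nat k *\<^sub>R m + y" unfolding y_def k by simp
    ultimately show ?thesis by blast
  qed
qed

lemma MP_D: "MP H D = {of_nat k *\<^sub>R m + y | k y. y \<in> MP H F}"
  using MP_D_subset MP_D_superset by (rule antisym)

lemma F_disjoint_PhiS: "F \<inter> PhiS H M = {}"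
proof (intro equals0I)
  fix x assume "x \<in> F \<inter> PhiS H M"
  then have "lam \<bullet> x = 0" "x \<in> rcone M" "h \<bullet> x = 1"
    using F_subset_slice unfolding PhiS_def H_def by auto
  then show False using rcone_M_nonneg by auto
qed

lemma good_hyperplane_H: "good_hyperplane M H"
  unfolding good_hyperplane_def
proof (intro conjI)
  have "h \<in> lattice_pts" unfolding h_def using lam_lattice mu_lattice by (rule lattice_pts_add)
  then show "rat_hyperplane H"
    unfolding rat_hyperplane_def H_def using h_m lattice_pts_imp_rat_vec by fastforce
  show "0 \<notin> H" unfolding H_def by simp
  show "rcone M = rcone (rcone M \<inter> H)"
    unfolding H_def using rcone_M_h_pos by (rule rcone_eq_rcone_hyperplane_slice)
qed

lemma rat_pyramid_D: "rat_pyramid H m F D"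
  unfolding rat_pyramid_def
proof (intro conjI)
  show "rat_vec m" using m_lattice by (rule lattice_pts_imp_rat_vec)
  have "rat_vec (base_pt g)" if "g \<in> G_off" for g
  proof -
    have "g \<in> lattice_pts" using that G_subset_M M_lattice unfolding G_off_def by auto
    then have "lam \<bullet> g \<in> \<rat>" "mu \<bullet> g \<in> \<rat>" "rat_vec g"
      using inner_lattice_pts_Ints lam_lattice mu_lattice Ints_subset_Rats lattice_pts_imp_rat_vec
      by blast+
    then show ?thesis
      using lattice_pts_imp_rat_vec[OF m_lattice] unfolding base_pt_def rat_vec_def by auto
  qed
  moreover have "finite V" unfolding V_def G_off_def using finite_G by auto
  ultimately show "rational_polytope F" unfolding rational_polytope_def F_def V_def by blast
  have "affine hull F \<subseteq> {x. lam \<bullet> x = 0}"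
    using F_subset_slice by (intro hull_minimal affine_hyperplane) auto
  then show "m \<notin> affine hull F" using lam_m by auto
  show "D = convex hull insert m F" by (rule D_eq)
  show "D \<subseteq> H" by (rule D_subset_H)
qed

lemma PhiV_m: "PhiV H m = {m}"
  unfolding H_def PhiV_hyperplane using h_m by simp

theorem admissible_config_D: "admissible_config M m H D D"
  unfolding admissible_config_def
  using good_hyperplane_H PhiV_m rat_pyramid_D PhiS_subset_D tangent_D MP_D F_disjoint_PhiS by blast

end

lemma lattice_pts_content:
  fixes m :: "real^'n"
  assumes m_lattice: "m \<in> lattice_pts" and "m \<noteq> 0"
  obtains d :: nat and \<nu> where "d > 0" "(1 / of_nat d) *\<^sub>R m \<in> lattice_pts"
    "\<nu> \<in> lattice_pts" "\<nu> \<bullet> m = of_nat d"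
proof -
  define attained where "attained n \<longleftrightarrow> n > 0 \<and> (\<exists>\<nu>\<in>lattice_pts. \<nu> \<bullet> m = of_nat n)" for n :: nat
  have "m \<bullet> m \<in> \<int>" "m \<bullet> m > 0" using inner_lattice_pts_Ints[OF m_lattice m_lattice] \<open>m \<noteq> 0\<close> by auto
  then obtain z where "m \<bullet> m = of_int z" "z > 0" by (auto elim: Ints_cases)
  then have "attained (nat z)" unfolding attained_def using m_lattice by (auto intro!: bexI[of _ m])
  define d where "d = (LEAST n. attained n)"
  have "attained d" unfolding d_def by (rule LeastI) fact
  then obtain \<nu> where d_pos: "d > 0" and \<nu>: "\<nu> \<in> lattice_pts" "\<nu> \<bullet> m = of_nat d"
    unfolding attained_def by blast
  have "(1 / of_nat d) * m $ i \<in> \<int>" for i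
  proof -
    have "m $ i \<in> \<int>" using m_lattice unfolding lattice_pts_def by blast
    then obtain z where z: "m $ i = of_int z" by (elim Ints_cases)
    define q r where "q = z div int d" and "r = z mod int d"
    have z_eq: "z = q * int d + r" unfolding q_def r_def by simp
    have r: "0 \<le> r" "r < int d" unfolding r_def using d_pos by auto
    define \<nu>' where "\<nu>' = axis i 1 - of_int q *\<^sub>R \<nu>"
    have "\<nu>' \<in> lattice_pts"
      unfolding \<nu>'_def by (intro lattice_pts_diff lattice_pts_scaleR axis_in_lattice_pts \<nu>) auto
    moreover have "\<nu>' \<bullet> m = of_int r"
    proof -
      have "axis i 1 \<bullet> m = m $ i" by (simp add: cart_eq_inner_axis inner_commute)
      then have "\<nu>' \<bullet> m = m $ i - of_int q * of_nat d"
        unfolding \<nu>'_def by (simp only: inner_diff_left inner_scaleR_left \<nu>(2))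
      also have "\<dots> = of_int r" unfolding z using z_eq by (simp add: algebra_simps)
      finally show ?thesis .
    qed
    ultimately have "attained (nat r)" if "r \<noteq> 0"
      unfolding attained_def using r that by (auto intro!: bexI[of _ \<nu>'])
    moreover have "\<not> attained (nat r)"
      using not_less_Least[of "nat r" attained] r unfolding d_def[symmetric] by linarith
    ultimately have "r = 0" by blast
    then have "m $ i = of_int q * of_nat d" using z z_eq by simp
    then show ?thesis using d_pos by simp
  qed
  then have "(1 / of_nat d) *\<^sub>R m \<in> lattice_pts" unfolding lattice_pts_def by simp
  then show ?thesis using that d_pos \<nu> by blast
qed

lemma extremal_generator_dual_vector:
  fixes M :: "(real^'n) set"
  assumes "normal_monoid M" "gp M = lattice_pts" "m \<in> M" "m \<in> lattice_pts" "m \<noteq> 0"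
    and ray_M: "ray m \<inter> M = range (\<lambda>k::nat. of_nat k *\<^sub>R m)"
  obtains \<nu> where "\<nu> \<in> lattice_pts" "\<nu> \<bullet> m = 1"
proof -
  obtain d :: nat and \<nu> where d: "d > 0" "(1 / of_nat d) *\<^sub>R m \<in> lattice_pts"
    and \<nu>: "\<nu> \<in> lattice_pts" "\<nu> \<bullet> m = of_nat d"
    using lattice_pts_content[OF assms(4,5)] by blast
  define w where "w = (1 / of_nat d) *\<^sub>R m"
  have "of_nat d *\<^sub>R w \<in> M" unfolding w_def using d \<open>m \<in> M\<close> by simp
  moreover have "w \<in> gp M" unfolding w_def using d assms(2) by simp
  ultimately have "w \<in> M" using assms(1) d(1) unfolding normal_monoid_def by (metis One_nat_def Suc_leI)
  moreover have "w \<in> ray m" unfolding ray_def w_def by auto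
  ultimately obtain k :: nat where "w = of_nat k *\<^sub>R m" using ray_M by blast
  then have "(1 / of_nat d - of_nat k) *\<^sub>R m = 0" unfolding w_def by (simp add: scaleR_diff_left)
  then have "of_nat k * of_nat d = (1::real)" using \<open>m \<noteq> 0\<close> d(1) by (simp add: field_simps)
  then have "k * d = 1" by (metis of_nat_1 of_nat_eq_iff of_nat_mult)
  then have "d = 1" by simp
  then show ?thesis using that \<nu> by simp
qed

lemma sum_in_convex_cone:
  assumes "convex_cone S" "\<And>i. i \<in> I \<Longrightarrow> f i \<in> S"
  shows "sum f I \<in> S"
  using assms(2)
  by (induction I rule: infinite_finite_induct)
     (auto simp: convex_cone_contains_0[OF assms(1)] convex_cone_add[OF assms(1)])

lemma affine_monoid_cone_generators:
  fixes M :: "(real^'n) set"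
  assumes "affine_monoid M"
  obtains G where "finite G" "G \<subseteq> M" "M \<subseteq> rcone G"
proof -
  from assms obtain G where G: "finite G" "G \<subseteq> M"
    and M_eq: "M = {(\<Sum>g\<in>G. of_nat (k g) *\<^sub>R g) | k :: real^'n \<Rightarrow> nat. True}"
    unfolding affine_monoid_def by blast
  have "(\<Sum>g\<in>G. of_nat (k g) *\<^sub>R g) \<in> convex_cone hull G" for k :: "real^'n \<Rightarrow> nat"
    by (rule sum_in_convex_cone[OF convex_cone_convex_cone_hull]) (simp add: convex_cone_hull_mul hull_inc)
  then have "M \<subseteq> rcone G" unfolding M_eq rcone_def by auto
  then show ?thesis using that G by blast
qed

lemma good_hyperplane_normal_form:
  assumes "good_hyperplane M H"
  obtains h where "rat_vec h" "H = {x. h \<bullet> x = 1}" "\<And>x. x \<in> rcone M \<Longrightarrow> x \<noteq> 0 \<Longrightarrow> 0 < h \<bullet> x"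
proof -
  from assms obtain a c where a: "rat_vec a" "c \<in> \<rat>" and H: "H = {x. a \<bullet> x = c}"
    and "0 \<notin> H" and rcone_M: "rcone M = rcone (rcone M \<inter> H)"
    unfolding good_hyperplane_def rat_hyperplane_def by blast
  then have "c \<noteq> 0" by auto
  define h where "h = (1 / c) *\<^sub>R a"
  have H_h: "H = {x. h \<bullet> x = 1}" unfolding H h_def using \<open>c \<noteq> 0\<close> by (auto simp: field_simps)
  have "rat_vec h" using a unfolding h_def rat_vec_def by auto
  moreover have "0 < h \<bullet> x" if "x \<in> rcone M" "x \<noteq> 0" for x
  proof -
    define S where "S = {x. 0 < h \<bullet> x} \<union> {0}"
    have "convex_cone S" unfolding convex_cone_iff S_def by (auto simp: inner_add_right)
    moreover have "rcone M \<inter> H \<subseteq> S" unfolding S_def H_h by auto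
    ultimately have "rcone (rcone M \<inter> H) \<subseteq> S" unfolding rcone_def by (rule hull_minimal[rotated])
    then show ?thesis using that rcone_M unfolding S_def by auto
  qed
  ultimately show ?thesis using that H_h by blast
qed

lemma extreme_point_separated_from_finite:
  fixes v :: "real^'n"
  assumes "v extreme_point_of P" "convex P" "finite S" "S \<subseteq> P" "v \<notin> S"
  obtains a where "\<And>s. s \<in> S \<Longrightarrow> a \<bullet> v < a \<bullet> s"
proof -
  have "convex hull S \<subseteq> P" using assms(4,2) by (rule hull_minimal)
  then have "v \<notin> convex hull S"
    using assms(1,5) extreme_point_of_convex_hull unfolding extreme_point_of_def by blast
  moreover have "closed (convex hull S)" using assms(3) by (simp add: compact_imp_closed finite_imp_compact_convex_hull)
  ultimately obtain a b where "a \<bullet> v < b" "\<forall>x\<in>convex hull S. b < a \<bullet> x"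
    using separating_hyperplane_closed_point[of "convex hull S" v] by auto
  then show ?thesis using that by (meson hull_inc less_trans)
qed

lemma lattice_functional_separating_point:
  fixes v :: "real^'n"
  assumes "finite S" "rat_vec h" "rat_vec v" "h \<bullet> v = 1" "\<And>s. s \<in> S \<Longrightarrow> h \<bullet> s = 1"
    and separated: "\<And>s. s \<in> S \<Longrightarrow> a \<bullet> v < a \<bullet> s"
  obtains mu where "mu \<in> lattice_pts" "mu \<bullet> v = 0" "\<And>s. s \<in> S \<Longrightarrow> 0 < mu \<bullet> s"
proof -
  have "\<And>w. w \<in> (\<lambda>s. s - v) ` S \<Longrightarrow> 0 < a \<bullet> w" using separated by (auto simp: inner_diff_right)
  with assms(1) obtain a' where "rat_vec a'" and "\<And>w. w \<in> (\<lambda>s. s - v) ` S \<Longrightarrow> 0 < a' \<bullet> w"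
    using rat_vec_positive_on_finite[of "(\<lambda>s. s - v) ` S" a] by blast
  then have a': "\<And>s. s \<in> S \<Longrightarrow> 0 < a' \<bullet> (s - v)" by blast
  \<comment> \<open>On \<open>h \<bullet> x = 1\<close> the correction term is the constant \<open>a' \<bullet> v\<close>.\<close>
  define mu0 where "mu0 = a' - (a' \<bullet> v) *\<^sub>R h"
  have "a' \<bullet> v \<in> \<rat>" using \<open>rat_vec a'\<close> assms(3) by (rule inner_rat_vec_Rats)
  then have "rat_vec mu0" unfolding mu0_def using \<open>rat_vec a'\<close> assms(2) by (simp add: rat_vec_def)
  then obtain d :: nat where "d > 0" "of_nat d *\<^sub>R mu0 \<in> lattice_pts"
    by (rule rat_vec_multiple_in_lattice_pts)
  moreover have "mu0 \<bullet> v = 0" unfolding mu0_def using assms(4) by (simp add: inner_diff_left)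
  moreover have "0 < mu0 \<bullet> s" if "s \<in> S" for s
    using a'[OF that] assms(5)[OF that] unfolding mu0_def by (simp add: inner_diff_left inner_diff_right)
  ultimately show ?thesis using that[of "of_nat d *\<^sub>R mu0"] by simp
qed

lemma vertex_separating_functional:
  fixes M G :: "(real^'n) set"
  assumes "finite G" "G \<subseteq> rcone M" "rat_vec h" "\<And>x. x \<in> rcone M \<Longrightarrow> x \<noteq> 0 \<Longrightarrow> 0 < h \<bullet> x"
    and m: "m \<in> lattice_pts" "m \<in> rcone M" "m \<noteq> 0"
    and vertex: "(1 / (h \<bullet> m)) *\<^sub>R m extreme_point_of PhiS {x. h \<bullet> x = 1} M"
  obtains mu where "mu \<in> lattice_pts" "mu \<bullet> m = 0" "\<And>g. g \<in> G \<Longrightarrow> g \<notin> ray m \<Longrightarrow> 0 < mu \<bullet> g"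
proof -
  define proj where "proj g = (1 / (h \<bullet> g)) *\<^sub>R g" for g
  define S where "S = proj ` {g\<in>G. g \<notin> ray m}"
  have h_pos: "0 < h \<bullet> g" if "g \<in> G" "g \<notin> ray m" for g
  proof -
    have "g \<noteq> 0" using that(2) unfolding ray_def by force
    then show ?thesis using assms(2,4) that(1) by blast
  qed
  have "S \<subseteq> PhiS {x. h \<bullet> x = 1} M"
  proof
    fix s assume "s \<in> S"
    then obtain g where "g \<in> G" "g \<notin> ray m" "s = proj g" unfolding S_def by auto
    then show "s \<in> PhiS {x. h \<bullet> x = 1} M"
      unfolding proj_def using assms(2) h_pos hyperplane_projection_in_PhiS by blast
  qed
  moreover have "proj m \<notin> S"
  proof
    assume "proj m \<in> S"
    then obtain g where g: "g \<in> G" "g \<notin> ray m" "proj g = proj m" unfolding S_def by auto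
    have "g \<in> ray m" using h_pos[OF g(1,2)] assms(4)[OF m(2,3)] g(3)
      unfolding proj_def by (rule hyperplane_projection_eq_imp_ray)
    then show False using g(2) by simp
  qed
  moreover have "convex (PhiS {x. h \<bullet> x = 1} M)" by (intro convex_PhiS convex_hyperplane)
  moreover have "finite S" unfolding S_def using assms(1) by simp
  ultimately obtain a where "\<And>s. s \<in> S \<Longrightarrow> a \<bullet> proj m < a \<bullet> s"
    using extreme_point_separated_from_finite[OF vertex[folded proj_def]] by blast
  moreover have "rat_vec (proj m)" unfolding proj_def
    using lattice_pts_imp_rat_vec[OF m(1)] inner_rat_vec_Rats[OF assms(3) lattice_pts_imp_rat_vec[OF m(1)]]
    by (simp add: rat_vec_def)
  moreover have "h \<bullet> proj m = 1" unfolding proj_def using assms(4)[OF m(2,3)] by simp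
  moreover have "\<And>s. s \<in> S \<Longrightarrow> h \<bullet> s = 1" using \<open>S \<subseteq> PhiS {x. h \<bullet> x = 1} M\<close> unfolding PhiS_def by auto
  ultimately obtain mu where mu: "mu \<in> lattice_pts" "mu \<bullet> proj m = 0" "\<And>s. s \<in> S \<Longrightarrow> 0 < mu \<bullet> s"
    using lattice_functional_separating_point[OF \<open>finite S\<close> assms(3)] by blast
  have mu_proj: "mu \<bullet> g = (h \<bullet> g) * (mu \<bullet> proj g)" if "h \<bullet> g \<noteq> 0" for g
    unfolding proj_def using that by simp
  have "mu \<bullet> m = 0" using mu_proj[of m] mu(2) assms(4)[OF m(2,3)] by simp
  moreover have "0 < mu \<bullet> g" if "g \<in> G" "g \<notin> ray m" for g
    using mu_proj[of g] h_pos[OF that] mu(3)[of "proj g"] that unfolding S_def by simp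
  ultimately show ?thesis using that mu(1) by blast
qed

lemma functional_positive_on_generators:
  fixes G :: "(real^'n) set"
  assumes "finite G" "G \<subseteq> lattice_pts" "\<nu> \<in> lattice_pts" "\<nu> \<bullet> m = 1"
    and mu: "mu \<in> lattice_pts" "mu \<bullet> m = 0" "\<And>g. g \<in> G \<Longrightarrow> g \<notin> ray m \<Longrightarrow> 0 < mu \<bullet> g"
  obtains lam where "lam \<in> lattice_pts" "lam \<bullet> m = 1"
    "\<And>g. g \<in> G \<Longrightarrow> (0 < mu \<bullet> g \<and> 0 < lam \<bullet> g) \<or> (g = (lam \<bullet> g) *\<^sub>R m \<and> 0 \<le> lam \<bullet> g)"
proof -
  define N where "N = nat \<lceil>\<Sum>g\<in>G. \<bar>\<nu> \<bullet> g\<bar>\<rceil> + 1"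
  define lam where "lam = \<nu> + of_nat N *\<^sub>R mu"
  have "lam \<in> lattice_pts" unfolding lam_def using assms(3) mu(1)
    by (intro lattice_pts_add lattice_pts_scaleR) auto
  moreover have lam_m: "lam \<bullet> m = 1" unfolding lam_def using assms(4) mu(2) by (simp add: inner_add_left)
  moreover have "(0 < mu \<bullet> g \<and> 0 < lam \<bullet> g) \<or> (g = (lam \<bullet> g) *\<^sub>R m \<and> 0 \<le> lam \<bullet> g)"
    if "g \<in> G" for g
  proof (cases "g \<in> ray m")
    case True
    then obtain t where "0 \<le> t" "g = t *\<^sub>R m" unfolding ray_def by auto
    then show ?thesis using lam_m by simp
  next
    case False
    \<comment> \<open>\<open>mu \<bullet> g\<close> is a positive integer, so the \<open>N mu\<close> term outweighs \<open>\<nu> \<bullet> g\<close>.\<close>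
    have "mu \<bullet> g \<in> \<int>" using inner_lattice_pts_Ints mu(1) assms(2) that by blast
    then obtain z where "mu \<bullet> g = of_int z" by (elim Ints_cases)
    then have "1 \<le> mu \<bullet> g" using mu(3)[OF that False] by simp
    have "\<bar>\<nu> \<bullet> g\<bar> \<le> (\<Sum>g\<in>G. \<bar>\<nu> \<bullet> g\<bar>)" using assms(1) that by (intro member_le_sum) auto
    then have "\<bar>\<nu> \<bullet> g\<bar> < of_nat N" unfolding N_def by linarith
    also have "\<dots> \<le> of_nat N * (mu \<bullet> g)" using mult_left_mono[OF \<open>1 \<le> mu \<bullet> g\<close>, of "of_nat N"] by simp
    finally have "0 < lam \<bullet> g" unfolding lam_def by (simp add: inner_add_left)
    then show ?thesis using mu(3)[OF that False] by simp
  qed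
  ultimately show ?thesis using that by blast
qed

theorem lemma3p4:
  fixes M :: "(real^'n) set" and m :: "real^'n"
  assumes "affine_monoid M"
    and "gp M = lattice_pts"
    and "positive_monoid M"
    and "normal_monoid M"
    and "CARD('n) \<ge> 2"
    and "\<exists>H0. good_hyperplane M H0 \<and> extremal_generator M H0 m"
  shows "\<exists>H D1 D2. admissible_config M m H D1 D2"
proof -
  obtain G where G: "finite G" "G \<subseteq> M" "M \<subseteq> rcone G"
    using assms(1) by (rule affine_monoid_cone_generators)
  have M_lattice: "M \<subseteq> lattice_pts" using assms(1) unfolding affine_monoid_def by blast
  obtain H0 where "good_hyperplane M H0" and "extremal_generator M H0 m" using assms(6) by blast
  then obtain v where "m \<in> M" "PhiV H0 m = {v}" "v extreme_point_of PhiS H0 M"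
    and ray_M: "ray m \<inter> M = range (\<lambda>k::nat. of_nat k *\<^sub>R m)"
    unfolding extremal_generator_def by blast
  obtain h0 where h0: "rat_vec h0" "H0 = {x. h0 \<bullet> x = 1}" "\<And>x. x \<in> rcone M \<Longrightarrow> x \<noteq> 0 \<Longrightarrow> 0 < h0 \<bullet> x"
    using good_hyperplane_normal_form[OF \<open>good_hyperplane M H0\<close>] by blast
  have m: "m \<in> lattice_pts" "m \<in> rcone M" "m \<noteq> 0"
    using \<open>m \<in> M\<close> M_lattice \<open>PhiV H0 m = {v}\<close> unfolding h0(2) rcone_def PhiV_hyperplane
    by (auto intro: hull_inc)
  then have "v = (1 / (h0 \<bullet> m)) *\<^sub>R m"
    using \<open>PhiV H0 m = {v}\<close> h0(3) unfolding h0(2) PhiV_hyperplane by auto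
  then obtain mu where mu: "mu \<in> lattice_pts" "mu \<bullet> m = 0" "\<And>g. g \<in> G \<Longrightarrow> g \<notin> ray m \<Longrightarrow> 0 < mu \<bullet> g"
    using vertex_separating_functional[OF G(1) _ h0(1) h0(3) m] \<open>v extreme_point_of PhiS H0 M\<close> G(2)
    unfolding h0(2) rcone_def by (blast intro: hull_inc)
  obtain \<nu> where "\<nu> \<in> lattice_pts" "\<nu> \<bullet> m = 1"
    using extremal_generator_dual_vector[OF assms(4,2) \<open>m \<in> M\<close> m(1,3) ray_M] .
  then obtain lam where "lam \<in> lattice_pts" "lam \<bullet> m = 1"
    "\<And>g. g \<in> G \<Longrightarrow> (0 < mu \<bullet> g \<and> 0 < lam \<bullet> g) \<or> (g = (lam \<bullet> g) *\<^sub>R m \<and> 0 \<le> lam \<bullet> g)"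
    using functional_positive_on_generators[OF G(1) _ _ _ mu] G(2) M_lattice by blast
  then interpret pyramid_construction M G m lam mu
    using G M_lattice \<open>m \<in> M\<close> mu by unfold_locales auto
  show ?thesis using admissible_config_D by blast
qed

end
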